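(* Let $\mathbf{x}_1,\ldots,\mathbf{x}_n\in\mathbb{R}^d$ be nonzero column vectors and $y_1,\ldots,y_n\in\mathbb{R}$. Let $\mathbf{T}\in\mathbb{R}^{n\times n}$ be the upper triangular matrix with $\mathbf{T}_{ik}=\mathbf{x}_i^\top\mathbf{x}_k$ for $i\le k$ and $0$ otherwise, let $\mathbf{a}^*=(a_1^*,\ldots,a_n^* )$ be the unique row vector with $(y_1,\ldots,y_n)=\mathbf{a}^*\mathbf{T}$, and set $\mathbf{w}_j^*=\sum_{i=1}^j a_i^*\mathbf{x}_i^\top\in\mathbb{R}^{1\times d}$ for $j=1,\ldots,n$. For $j=1,\ldots,n-1$ define the online loss $L_j(\mathbf{w})=\frac12(\mathbf{w}\mathbf{x}_{j+1}-y_{j+1})^2$, with gradient $\nabla_{\mathbf{w}}L_j(\mathbf{w})=(\mathbf{w}\mathbf{x}_{j+1}-y_{j+1})\mathbf{x}_{j+1}^\top$. Then for every $j=1,\ldots,n-1$, $$\mathbf{w}_{j+1}^*=\mathbf{w}_j^*-\frac{1}{\|\mathbf{x}_{j+1}\|_2^2}\nabla_{\mathbf{w}}L_j(\mathbf{w}_j^* ).$$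
   Context: Weight vectors are $1\times d$ row vectors and inputs are $d\times 1$ column vectors. The vectors $\mathbf{w}_j^*$ are the stationary points of the per-position weight iteration $\mathbf{w}_j^{(l)}=\mathbf{w}_j^{(l-1)}+\frac{\eta}{n}\sum_{i=1}^j(y_i-\mathbf{w}_i^{(l-1)}\mathbf{x}_i)\mathbf{x}_i^\top$ (with $\mathbf{w}_j^{(0)}=0$) associated with a multi-layer causal linear self-attention in-context learner. *)

theory Defs
  imports "HOL-Analysis.Analysis"
begin

(* Vectors in R^d are modelled as real^'d (row and column vectors identified);
   the data x_1..x_n, y_1..y_n are sequences indexed by nat, used on {1..n}. *)

definition Tmat :: "(nat \<Rightarrow> real^'d) \<Rightarrow> nat \<Rightarrow> nat \<Rightarrow> real" where
  "Tmat x i k = (if i \<le> k then x i \<bullet> x k else 0)"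

definition wstar :: "(nat \<Rightarrow> real) \<Rightarrow> (nat \<Rightarrow> real^'d) \<Rightarrow> nat \<Rightarrow> real^'d" where
  "wstar a x j = (\<Sum>i=1..j. a i *\<^sub>R x i)"

definition online_loss :: "(nat \<Rightarrow> real^'d) \<Rightarrow> (nat \<Rightarrow> real) \<Rightarrow> nat \<Rightarrow> real^'d \<Rightarrow> real" where
  "online_loss x y j w = (1/2) * (w \<bullet> x (Suc j) - y (Suc j))^2"

definition online_grad :: "(nat \<Rightarrow> real^'d) \<Rightarrow> (nat \<Rightarrow> real) \<Rightarrow> nat \<Rightarrow> real^'d \<Rightarrow> real^'d" where
  "online_grad x y j w = (w \<bullet> x (Suc j) - y (Suc j)) *\<^sub>R x (Suc j)"

end

theory Submission
  imports Defs
begin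

text \<open>Column k of the equation y = a* T, with T upper triangular, reads
  y_k = w*_k x_k. Since w*_{j+1} - w*_j = a*_{j+1} x_{j+1} is parallel to x_{j+1}, the
  point w*_{j+1} is reached from w*_j by the step along x_{j+1} that solves the single
  linear equation w x_{j+1} = y_{j+1} exactly, i.e. a normalized gradient step on L_j.\<close>

lemma step_along_direction_eq_normalized_gradient_step:
  fixes w v :: "'a::real_inner"
  assumes "v \<noteq> 0"
  shows "w + c *\<^sub>R v = w - (1 / (norm v)\<^sup>2) *\<^sub>R ((w \<bullet> v - (w + c *\<^sub>R v) \<bullet> v) *\<^sub>R v)"
proof -
  have "w \<bullet> v - (w + c *\<^sub>R v) \<bullet> v = - c * (norm v)\<^sup>2"
    by (simp add: inner_add_left power2_norm_eq_inner)
  with assms show ?thesis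
    by simp
qed

lemma wstar_Suc: "wstar a x (Suc j) = wstar a x j + a (Suc j) *\<^sub>R x (Suc j)"
  by (simp add: wstar_def)

lemma column_sum_Tmat_eq_wstar_inner:
  assumes "k \<le> n"
  shows "(\<Sum>i=1..n. a i * Tmat x i k) = wstar a x k \<bullet> x k"
proof -
  have "(\<Sum>i=1..n. a i * Tmat x i k) = (\<Sum>i=1..k. a i * Tmat x i k)"
    by (rule sum.mono_neutral_right) (use assms in \<open>auto simp: Tmat_def\<close>)
  also have "\<dots> = (\<Sum>i=1..k. a i * (x i \<bullet> x k))"
    by (rule sum.cong) (auto simp: Tmat_def)
  also have "\<dots> = wstar a x k \<bullet> x k"
    by (simp add: wstar_def inner_sum_left)
  finally show ?thesis .
qed

theorem proposition5:
  fixes x :: "nat \<Rightarrow> real^'d" and y :: "nat \<Rightarrow> real" and a :: "nat \<Rightarrow> real" and n :: nat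
  assumes nz: "\<And>i. i \<in> {1..n} \<Longrightarrow> x i \<noteq> 0"
    and astar: "\<And>k. k \<in> {1..n} \<Longrightarrow> y k = (\<Sum>i=1..n. a i * Tmat x i k)"
  shows "\<forall>j\<in>{1..n-1}. wstar a x (Suc j) =
           wstar a x j - (1 / (norm (x (Suc j)))\<^sup>2) *\<^sub>R online_grad x y j (wstar a x j)"
proof
  fix j assume "j \<in> {1..n-1}"
  then have k: "Suc j \<in> {1..n}" by auto
  have "y (Suc j) = wstar a x (Suc j) \<bullet> x (Suc j)"
    using astar[OF k] column_sum_Tmat_eq_wstar_inner k by simp
  then show "wstar a x (Suc j) =
           wstar a x j - (1 / (norm (x (Suc j)))\<^sup>2) *\<^sub>R online_grad x y j (wstar a x j)"
    unfolding online_grad_def wstar_Suc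
    using step_along_direction_eq_normalized_gradient_step[OF nz[OF k]] by simp
qed

end
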